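(* Let $\mathcal{X}\subset\mathbb{R}^p$ be open and contractible, let $f,\phi\in C^3(\mathcal{X})$ with $\phi$ of Legendre type. Assume: (A3) there is $m\ge0$ with $m\|\nabla\phi(\mathbf{x})-\nabla\phi(\mathbf{x}')\|_2^2\le\langle\nabla f(\mathbf{x})-\nabla f(\mathbf{x}'),\nabla\phi(\mathbf{x})-\nabla\phi(\mathbf{x}')\rangle$ for all $\mathbf{x},\mathbf{x}'\in\mathcal{X}$; (A4) there is $M>0$ with $\|\nabla f(\mathbf{x})-\nabla f(\mathbf{x}')\|_2\le M\|\nabla\phi(\mathbf{x})-\nabla\phi(\mathbf{x}')\|_2$ for all $\mathbf{x},\mathbf{x}'\in\mathcal{X}$; (A5) there is $\delta\ge0$ with $\|[(D^2\phi(\mathbf{x}))^{-1},D^2f(\mathbf{x})]\|_2\le\delta$ for all $\mathbf{x}\in\mathcal{X}$. Then for all $\mathbf{x}_1,\mathbf{x}_2\in\mathcal{X}$, $$\langle\nabla f(\mathbf{x}_1)-\nabla f(\mathbf{x}_2),\nabla\phi(\mathbf{x}_1)-\nabla\phi(\mathbf{x}_2)\rangle\ge A\|\nabla f(\mathbf{x}_1)-\nabla f(\mathbf{x}_2)\|_2^2+B\|\nabla\phi(\mathbf{x}_1)-\nabla\phi(\mathbf{x}_2)\|_2^2,$$ with $A:=\frac{1}{m+M}$ and $B:=\frac{4mM-4M\delta-\delta^2}{4(m+M)}$.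
   Context: A Legendre-type function is in the sense of Rockafellar (Convex Analysis, Ch. 26); $\nabla\phi$ is a bijection from $\mathcal{X}$ onto $\mathrm{int\,dom}\,\phi^*$ with inverse $\nabla\phi^*$. $\|\cdot\|_2$ is the Euclidean norm for vectors and spectral norm for matrices; $[\mathbf{M}_1,\mathbf{M}_2]=\mathbf{M}_1\mathbf{M}_2-\mathbf{M}_2\mathbf{M}_1$. *)

theory Defs
  imports "HOL-Analysis.Analysis"
begin

definition grad :: "(real^'n \<Rightarrow> real) \<Rightarrow> real^'n \<Rightarrow> real^'n" where
  "grad f x = (\<chi> i. frechet_derivative f (at x) (axis i 1))"

definition hessian :: "(real^'n \<Rightarrow> real) \<Rightarrow> real^'n \<Rightarrow> real^'n^'n" where
  "hessian f x = matrix (frechet_derivative (grad f) (at x))"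

definition C3_on :: "(real^'n) set \<Rightarrow> (real^'n \<Rightarrow> real) \<Rightarrow> bool" where
  "C3_on X f \<longleftrightarrow>
     (\<forall>x\<in>X. f differentiable (at x)) \<and>
     (\<forall>x\<in>X. grad f differentiable (at x)) \<and>
     (\<forall>x\<in>X. hessian f differentiable (at x)) \<and>
     (\<forall>i. continuous_on X (\<lambda>x. frechet_derivative (hessian f) (at x) (axis i 1)))"

definition strictly_convex_on :: "'a::real_vector set \<Rightarrow> ('a \<Rightarrow> real) \<Rightarrow> bool" where
  "strictly_convex_on S g \<longleftrightarrow>
     (\<forall>x\<in>S. \<forall>y\<in>S. \<forall>t::real. x \<noteq> y \<and> 0 < t \<and> t < 1 \<longrightarrow>
        g ((1 - t) *\<^sub>R x + t *\<^sub>R y) < (1 - t) * g x + t * g y)"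

text \<open>Legendre type (Rockafellar, Ch. 26) for a function with int dom = X:
  convex, essentially smooth (differentiable on the nonempty open convex set X,
  gradient norm blowing up at boundary points) and essentially strictly convex
  (strictly convex on dom of the subdifferential, which is X).\<close>
definition legendre_type :: "(real^'n) set \<Rightarrow> (real^'n \<Rightarrow> real) \<Rightarrow> bool" where
  "legendre_type X \<phi> \<longleftrightarrow>
     X \<noteq> {} \<and> open X \<and> convex X \<and> convex_on X \<phi> \<and> strictly_convex_on X \<phi> \<and>
     (\<forall>x\<in>X. \<phi> differentiable (at x)) \<and>
     (\<forall>s z. (\<forall>k. s k \<in> X) \<and> s \<longlonglongrightarrow> z \<and> z \<in> frontier X \<longrightarrow>
        filterlim (\<lambda>k. norm (grad \<phi> (s k))) at_top sequentially)"

definition spec_norm :: "real^'n^'m \<Rightarrow> real" where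
  "spec_norm A = onorm (\<lambda>v. A *v v)"

definition commutator :: "real^'n^'n \<Rightarrow> real^'n^'n \<Rightarrow> real^'n^'n" where
  "commutator A B = A ** B - B ** A"

end

theory Submission
  imports Defs
begin

text \<open>
  Write \<open>J\<^sub>x = D\<^sup>2f(x) (D\<^sup>2\<phi>(x))\<^sup>-\<^sup>1\<close>. Since \<open>\<phi>\<close> is of Legendre type, \<open>\<nabla>\<phi>\<close> is a bijection of \<open>X\<close>
  onto a convex set: for \<open>y\<close> on a segment between two gradients, the tilted function
  \<open>\<phi> - \<langle>y, \<cdot>\<rangle>\<close> has bounded sublevel sets, and essential smoothness prevents its minimizing
  sequences from escaping to the boundary of \<open>X\<close>, so it attains its minimum at a point with
  gradient \<open>y\<close>. Hence \<open>\<psi> = \<nabla>f \<circ> (\<nabla>\<phi>)\<^sup>-\<^sup>1\<close> is defined on the segment from \<open>\<nabla>\<phi>(x\<^sub>2)\<close> to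
  \<open>\<nabla>\<phi>(x\<^sub>1)\<close>, with derivative \<open>J\<^sub>x\<close> at \<open>\<nabla>\<phi>(x)\<close>.

  Differentiating (A3) and (A4) gives \<open>m|w|\<^sup>2 \<le> \<langle>J\<^sub>xw, w\<rangle>\<close> and \<open>|J\<^sub>xw| \<le> M|w|\<close>; as both Hessians
  are symmetric, the adjoint of \<open>J\<^sub>x\<close> is \<open>(D\<^sup>2\<phi>(x))\<^sup>-\<^sup>1 D\<^sup>2f(x)\<close>, so (A5) bounds its skew part by \<open>\<delta>/2\<close>.
  Splitting \<open>J\<^sub>x\<close> into symmetric and skew parts yields
  \<open>|J\<^sub>xv|\<^sup>2 + (mM - M\<delta> - \<delta>\<^sup>2/4)|v|\<^sup>2 \<le> (m + M)\<langle>J\<^sub>xv, v\<rangle>\<close>, i.e. \<open>J\<^sub>xv\<close> lies in a closed convex set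
  depending only on \<open>v\<close>. With \<open>v = \<nabla>\<phi>(x\<^sub>1) - \<nabla>\<phi>(x\<^sub>2)\<close>, the mean value theorem in convex form
  puts \<open>\<psi>(1) - \<psi>(0) = \<nabla>f(x\<^sub>1) - \<nabla>f(x\<^sub>2)\<close> into the same set, which is the claim.

  Only two derivatives of \<open>f\<close> and \<open>\<phi>\<close> enter, and
  \<open>m \<ge> 0\<close>, \<open>M > 0\<close> matter only through \<open>m + M > 0\<close>.
\<close>

lemma has_derivative_grad:
  fixes f :: "real^'n \<Rightarrow> real"
  assumes "f differentiable (at x)"
  shows "(f has_derivative (\<lambda>h. grad f x \<bullet> h)) (at x)"
proof -
  let ?D = "frechet_derivative f (at x)"
  have D: "(f has_derivative ?D) (at x)"
    using assms frechet_derivative_works by blast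
  interpret D: linear ?D using has_derivative_linear[OF D] .
  have "?D h = grad f x \<bullet> h" for h
  proof -
    have "?D h = ?D (\<Sum>i\<in>UNIV. h$i *\<^sub>R axis i 1)"
      using basis_expansion[of h] by (simp add: scalar_mult_eq_scaleR)
    also have "\<dots> = grad f x \<bullet> h"
      by (simp add: D.sum D.scale grad_def inner_vec_def mult.commute)
    finally show ?thesis .
  qed
  then have "?D = (\<lambda>h. grad f x \<bullet> h)" by auto
  with D show ?thesis by simp
qed

lemma has_derivative_hessian:
  fixes f :: "real^'n \<Rightarrow> real"
  assumes "grad f differentiable (at x)"
  shows "(grad f has_derivative (\<lambda>h. hessian f x *v h)) (at x)"
proof -
  let ?D = "frechet_derivative (grad f) (at x)"
  have D: "(grad f has_derivative ?D) (at x)"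
    using assms frechet_derivative_works by blast
  then have "(\<lambda>h. hessian f x *v h) = ?D"
    unfolding hessian_def by (simp add: has_derivative_linear fun_eq_iff)
  with D show ?thesis by simp
qed

lemma has_vector_derivative_along_line:
  assumes "(F has_derivative F') (at (p + t *\<^sub>R q))"
  shows "((\<lambda>t. F (p + t *\<^sub>R q)) has_vector_derivative F' q) (at t)"
proof -
  interpret F': bounded_linear F' using has_derivative_bounded_linear[OF assms] .
  have "((\<lambda>t. p + t *\<^sub>R q) has_derivative (\<lambda>h. h *\<^sub>R q)) (at t)"
    by (auto intro!: derivative_eq_intros)
  from has_derivative_compose[OF this assms]
  show ?thesis by (simp add: has_vector_derivative_def F'.scaleR)
qed

lemma has_real_derivative_grad_along_line:
  fixes f :: "real^'n \<Rightarrow> real"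
  assumes "f differentiable (at (p + t *\<^sub>R q))"
  shows "((\<lambda>t. f (p + t *\<^sub>R q)) has_real_derivative grad f (p + t *\<^sub>R q) \<bullet> q) (at t)"
  using has_vector_derivative_along_line[OF has_derivative_grad[OF assms]]
  by (simp add: has_real_derivative_iff_has_vector_derivative)

lemma tendsto_difference_quotient:
  assumes "(F has_derivative F') (at x)"
  shows "((\<lambda>s. (1 / s) *\<^sub>R (F (x + s *\<^sub>R h) - F x)) \<longlongrightarrow> F' h) (at_right 0)"
proof -
  have "((\<lambda>s. F (x + s *\<^sub>R h)) has_vector_derivative F' h) (at 0 within {0<..})"
    using has_vector_derivative_along_line[of F F' x 0 h] assms
    by (simp add: has_vector_derivative_at_within)
  then have "((\<lambda>s. (F (x + s *\<^sub>R h) - F x - s *\<^sub>R F' h) /\<^sub>R norm s) \<longlongrightarrow> 0) (at_right 0)"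
    by (simp add: has_vector_derivative_def has_derivative_at_within)
  then have "((\<lambda>s. (1 / s) *\<^sub>R (F (x + s *\<^sub>R h) - F x) - F' h) \<longlongrightarrow> 0) (at_right 0)"
    by (rule Lim_transform_eventually)
      (auto simp: eventually_at_right_less scaleR_diff_right divide_inverse_commute
        intro!: eventually_mono[OF eventually_at_right_less])
  then show ?thesis
    by (simp add: Lim_null[symmetric])
qed

section \<open>Symmetry of the Hessian\<close>

definition second_difference :: "('a::real_vector \<Rightarrow> real) \<Rightarrow> 'a \<Rightarrow> 'a \<Rightarrow> 'a \<Rightarrow> real \<Rightarrow> real" where
  "second_difference f x v w s = f (x + s *\<^sub>R v + s *\<^sub>R w) - f (x + s *\<^sub>R v) - f (x + s *\<^sub>R w) + f x"

lemma second_difference_commute: "second_difference f x v w s = second_difference f x w v s"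
  by (simp add: second_difference_def add_ac)

lemma second_difference_mean_value:
  fixes f :: "real^'n \<Rightarrow> real"
  assumes "\<And>t. 0 \<le> t \<Longrightarrow> t \<le> 1 \<Longrightarrow> f differentiable (at (x + s *\<^sub>R w + t *\<^sub>R (s *\<^sub>R v)))"
    and "\<And>t. 0 \<le> t \<Longrightarrow> t \<le> 1 \<Longrightarrow> f differentiable (at (x + t *\<^sub>R (s *\<^sub>R v)))"
  obtains \<tau> where "0 < \<tau>" "\<tau> < 1" "second_difference f x v w s =
    (grad f (x + s *\<^sub>R w + \<tau> *\<^sub>R (s *\<^sub>R v)) - grad f (x + \<tau> *\<^sub>R (s *\<^sub>R v))) \<bullet> (s *\<^sub>R v)"
proof -
  have "((\<lambda>t. f (x + s *\<^sub>R w + t *\<^sub>R (s *\<^sub>R v)) - f (x + t *\<^sub>R (s *\<^sub>R v))) has_real_derivative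
      (grad f (x + s *\<^sub>R w + t *\<^sub>R (s *\<^sub>R v)) - grad f (x + t *\<^sub>R (s *\<^sub>R v))) \<bullet> (s *\<^sub>R v)) (at t)"
    if "0 \<le> t" "t \<le> 1" for t
    unfolding inner_diff_left using assms that by (intro DERIV_diff has_real_derivative_grad_along_line)
  from MVT2[OF zero_less_one this] show ?thesis
    by (auto simp: second_difference_def add_ac intro: that)
qed

lemma second_difference_estimate:
  fixes f :: "real^'n \<Rightarrow> real"
  assumes df: "\<And>z. z \<in> ball x \<rho> \<Longrightarrow> f differentiable (at z)"
    and approx: "\<And>y. y \<in> ball x \<rho> \<Longrightarrow> norm (grad f y - grad f x - H *v (y - x)) \<le> e * norm (y - x)"
    and e: "0 \<le> e" and s: "0 < s" "s * (norm v + norm w) < \<rho>"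
  shows "\<bar>second_difference f x v w s - s\<^sup>2 * ((H *v w) \<bullet> v)\<bar> \<le> e * s\<^sup>2 * ((2 * norm v + norm w) * norm v)"
proof -
  define err where "err y = grad f y - grad f x - H *v (y - x)" for y
  define p where "p t = t *\<^sub>R (s *\<^sub>R v)" for t
  have near: "norm (x + s *\<^sub>R w + p t - x) \<le> s * (norm v + norm w)" "norm (x + p t - x) \<le> s * norm v"
    and in_ball: "x + s *\<^sub>R w + p t \<in> ball x \<rho>" "x + p t \<in> ball x \<rho>" if "0 \<le> t" "t \<le> 1" for t
  proof -
    have "norm (p t) \<le> s * norm v" "0 \<le> s * norm w"
      using that s by (simp_all add: p_def mult_left_le_one_le)
    moreover have "norm (s *\<^sub>R w + p t) \<le> s * norm w + norm (p t)"
      using norm_triangle_ineq[of "s *\<^sub>R w" "p t"] s by simp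
    ultimately have "norm (s *\<^sub>R w + p t) \<le> s * (norm v + norm w)" "norm (p t) \<le> s * (norm v + norm w)"
      unfolding distrib_left by linarith+
    with \<open>norm (p t) \<le> s * norm v\<close> s(2)
    show "norm (x + s *\<^sub>R w + p t - x) \<le> s * (norm v + norm w)" "norm (x + p t - x) \<le> s * norm v"
      "x + s *\<^sub>R w + p t \<in> ball x \<rho>" "x + p t \<in> ball x \<rho>"
      by (simp_all add: dist_norm add.assoc norm_uminus_minus)
  qed
  obtain \<tau> where \<tau>: "0 < \<tau>" "\<tau> < 1"
    and mvt: "second_difference f x v w s = (grad f (x + s *\<^sub>R w + p \<tau>) - grad f (x + p \<tau>)) \<bullet> (s *\<^sub>R v)"
    using second_difference_mean_value[where f = f and x = x and v = v and w = w and s = s] df in_ball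
    unfolding p_def by blast
  have "grad f (x + s *\<^sub>R w + p \<tau>) - grad f (x + p \<tau>) = s *\<^sub>R (H *v w) + (err (x + s *\<^sub>R w + p \<tau>) - err (x + p \<tau>))"
    by (simp add: err_def matrix_vector_right_distrib matrix_vector_mult_scaleR)
  with mvt have "second_difference f x v w s - s\<^sup>2 * ((H *v w) \<bullet> v)
      = (err (x + s *\<^sub>R w + p \<tau>) - err (x + p \<tau>)) \<bullet> (s *\<^sub>R v)"
    by (simp add: inner_add_left power2_eq_square distrib_left)
  also have "\<bar>\<dots>\<bar> \<le> (norm (err (x + s *\<^sub>R w + p \<tau>)) + norm (err (x + p \<tau>))) * (s * norm v)"
    using Cauchy_Schwarz_ineq2[of "err (x + s *\<^sub>R w + p \<tau>) - err (x + p \<tau>)" "s *\<^sub>R v"] s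
      norm_triangle_ineq4[of "err (x + s *\<^sub>R w + p \<tau>)" "err (x + p \<tau>)"]
    by (simp add: mult_right_mono order_trans)
  also have "\<dots> \<le> (e * (s * (norm v + norm w)) + e * (s * norm v)) * (s * norm v)"
  proof -
    have "0 \<le> \<tau>" "\<tau> \<le> 1"
      using \<tau> by auto
    then have "norm (err (x + s *\<^sub>R w + p \<tau>)) \<le> e * (s * (norm v + norm w))"
      "norm (err (x + p \<tau>)) \<le> e * (s * norm v)"
      using approx[OF in_ball(1)] approx[OF in_ball(2)] near e unfolding err_def
      by (meson mult_left_mono order_trans)+
    then show ?thesis
      using s by (intro mult_right_mono add_mono) auto
  qed
  also have "\<dots> = e * s\<^sup>2 * ((2 * norm v + norm w) * norm v)"
    by (simp add: power2_eq_square algebra_simps)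
  finally show ?thesis .
qed

lemma hessian_symmetric:
  fixes f :: "real^'n \<Rightarrow> real"
  assumes X: "open X" "x \<in> X" and df: "\<And>z. z \<in> X \<Longrightarrow> f differentiable (at z)"
    and dg: "grad f differentiable (at x)"
  shows "(hessian f x *v w) \<bullet> v = (hessian f x *v v) \<bullet> w"
proof -
  let ?H = "hessian f x"
  define K where "K = (2 * norm v + norm w) * norm v + (2 * norm w + norm v) * norm w + 1"
  have K: "K > 0"
    unfolding K_def by (intro add_nonneg_pos add_nonneg_nonneg mult_nonneg_nonneg) auto
  have bound: "\<bar>(?H *v w) \<bullet> v - (?H *v v) \<bullet> w\<bar> \<le> e * K" if e: "e > 0" for e
  proof -
    obtain d where d: "d > 0"
      "\<And>y. norm (y - x) < d \<Longrightarrow> norm (grad f y - grad f x - ?H *v (y - x)) \<le> e * norm (y - x)"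
      using has_derivative_hessian[OF dg] e unfolding has_derivative_at_alt by blast
    obtain r where r: "r > 0" "ball x r \<subseteq> X"
      using X open_contains_ball by blast
    define \<rho> where "\<rho> = min d r"
    define s where "s = \<rho> / (norm v + norm w + 1)"
    have "\<rho> > 0" "norm v + norm w + 1 > 0"
      using d(1) r(1) by (auto simp: \<rho>_def add_nonneg_pos)
    then have "0 < s" "s * (norm v + norm w + 1) = \<rho>"
      by (simp_all add: s_def)
    then have s: "0 < s" "s * (norm v + norm w) < \<rho>" "s * (norm w + norm v) < \<rho>"
      by (simp_all add: add.commute distrib_left)
    have df': "f differentiable (at z)" if "z \<in> ball x \<rho>" for z
      using that r(2) df by (auto simp: \<rho>_def)
    have approx: "norm (grad f y - grad f x - ?H *v (y - x)) \<le> e * norm (y - x)" if "y \<in> ball x \<rho>" for y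
      using that d(2)[of y] by (simp add: \<rho>_def dist_norm norm_minus_commute[of x y])
    have "\<bar>second_difference f x v w s - s\<^sup>2 * ((?H *v w) \<bullet> v)\<bar> \<le> e * s\<^sup>2 * ((2 * norm v + norm w) * norm v)"
      "\<bar>second_difference f x w v s - s\<^sup>2 * ((?H *v v) \<bullet> w)\<bar> \<le> e * s\<^sup>2 * ((2 * norm w + norm v) * norm w)"
      using e s by (auto intro!: second_difference_estimate df' approx)
    then have "\<bar>s\<^sup>2 * ((?H *v w) \<bullet> v) - s\<^sup>2 * ((?H *v v) \<bullet> w)\<bar>
        \<le> e * s\<^sup>2 * ((2 * norm v + norm w) * norm v) + e * s\<^sup>2 * ((2 * norm w + norm v) * norm w)"
      unfolding second_difference_commute[of f x w v s] by linarith
    also have "\<dots> \<le> s\<^sup>2 * (e * K)"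
      using e unfolding K_def by (simp add: algebra_simps)
    finally show ?thesis
      using s(1) by (simp add: abs_mult right_diff_distrib[symmetric])
  qed
  have "\<bar>(?H *v w) \<bullet> v - (?H *v v) \<bullet> w\<bar> \<le> 0"
  proof (rule field_le_epsilon)
    fix e :: real assume "e > 0"
    with bound[of "e / K"] K show "\<bar>(?H *v w) \<bullet> v - (?H *v v) \<bullet> w\<bar> \<le> 0 + e" by simp
  qed
  then show ?thesis by simp
qed

lemma convex_on_grad_inequality:
  fixes \<phi> :: "real^'n \<Rightarrow> real"
  assumes cvx: "convex_on X \<phi>" and dx: "\<phi> differentiable (at x)" and x: "x \<in> X" and w: "w \<in> X"
  shows "\<phi> x + grad \<phi> x \<bullet> (w - x) \<le> \<phi> w"
proof -
  have "((\<lambda>s. (1 / s) *\<^sub>R (\<phi> (x + s *\<^sub>R (w - x)) - \<phi> x)) \<longlongrightarrow> grad \<phi> x \<bullet> (w - x)) (at_right 0)"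
    using tendsto_difference_quotient[OF has_derivative_grad[OF dx]] .
  moreover have "\<forall>\<^sub>F s in at_right 0. (1 / s) *\<^sub>R (\<phi> (x + s *\<^sub>R (w - x)) - \<phi> x) \<le> \<phi> w - \<phi> x"
    using eventually_at_right_real[OF zero_less_one]
  proof eventually_elim
    case (elim s)
    then have "\<phi> ((1 - s) *\<^sub>R x + s *\<^sub>R w) \<le> (1 - s) * \<phi> x + s * \<phi> w"
      using convex_onD[OF cvx] x w by simp
    moreover have "(1 - s) *\<^sub>R x + s *\<^sub>R w = x + s *\<^sub>R (w - x)"
      by (simp add: algebra_simps)
    ultimately show ?case
      using elim by (simp add: field_simps)
  qed
  ultimately have "grad \<phi> x \<bullet> (w - x) \<le> \<phi> w - \<phi> x"
    by (rule tendsto_upperbound) simp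
  then show ?thesis by simp
qed

lemma strictly_convex_on_grad_inequality:
  fixes \<phi> :: "real^'n \<Rightarrow> real"
  assumes cvx: "convex_on X \<phi>" and scvx: "strictly_convex_on X \<phi>"
    and dx: "\<phi> differentiable (at x)" and x: "x \<in> X" and w: "w \<in> X" and "x \<noteq> w"
  shows "\<phi> x + grad \<phi> x \<bullet> (w - x) < \<phi> w"
proof -
  define c where "c = (1 - 1/2) *\<^sub>R x + (1/2) *\<^sub>R w"
  have "c \<in> X"
    using convexD[of X x w "1 - 1/2" "1/2"] cvx x w by (simp add: c_def convex_on_def)
  then have "\<phi> x + grad \<phi> x \<bullet> (c - x) \<le> \<phi> c"
    by (rule convex_on_grad_inequality[OF cvx dx x])
  moreover have "\<phi> c < (1 - 1/2) * \<phi> x + (1/2) * \<phi> w"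
  proof -
    have "\<forall>t. x \<noteq> w \<and> 0 < t \<and> t < 1 \<longrightarrow> \<phi> ((1 - t) *\<^sub>R x + t *\<^sub>R w) < (1 - t) * \<phi> x + t * \<phi> w"
      using scvx x w unfolding strictly_convex_on_def by blast
    from spec[OF this, of "1/2"] \<open>x \<noteq> w\<close> show ?thesis
      unfolding c_def by linarith
  qed
  moreover have "c - x = (1/2) *\<^sub>R (w - x)"
    unfolding c_def by (simp add: scaleR_diff_left scaleR_diff_right)
  ultimately show ?thesis
    by (simp add: inner_scaleR_right)
qed

lemma inj_on_grad_strictly_convex:
  fixes \<phi> :: "real^'n \<Rightarrow> real"
  assumes cvx: "convex_on X \<phi>" and scvx: "strictly_convex_on X \<phi>"
    and df: "\<And>x. x \<in> X \<Longrightarrow> \<phi> differentiable (at x)"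
  shows "inj_on (grad \<phi>) X"
proof (rule inj_onI, rule ccontr)
  fix a b assume a: "a \<in> X" and b: "b \<in> X" and eq: "grad \<phi> a = grad \<phi> b" and "a \<noteq> b"
  have "\<phi> a + grad \<phi> a \<bullet> (b - a) < \<phi> b" "\<phi> b + grad \<phi> b \<bullet> (a - b) < \<phi> a"
    using a b \<open>a \<noteq> b\<close> by (simp_all add: strictly_convex_on_grad_inequality[OF cvx scvx df])
  with eq show False
    by (simp add: inner_diff_right)
qed

section \<open>The gradient image of a function of Legendre type\<close>

definition bregman :: "(real^'n \<Rightarrow> real) \<Rightarrow> real^'n \<Rightarrow> real^'n \<Rightarrow> real" where
  "bregman \<phi> x0 x = \<phi> x - \<phi> x0 - grad \<phi> x0 \<bullet> (x - x0)"

lemma bregman_nonneg: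
  fixes \<phi> :: "real^'n \<Rightarrow> real"
  assumes "convex_on X \<phi>" "\<And>x. x \<in> X \<Longrightarrow> \<phi> differentiable (at x)" "x0 \<in> X" "x \<in> X"
  shows "0 \<le> bregman \<phi> x0 x"
  using convex_on_grad_inequality[OF assms(1) assms(2)[OF assms(3)] assms(3,4)] by (simp add: bregman_def)

lemma bregman_linear_growth:
  fixes \<phi> :: "real^'n \<Rightarrow> real"
  assumes cvx: "convex_on X \<phi>" and scvx: "strictly_convex_on X \<phi>"
    and df: "\<And>x. x \<in> X \<Longrightarrow> \<phi> differentiable (at x)"
    and x0: "x0 \<in> X" and r: "0 < r" "cball x0 r \<subseteq> X"
  obtains \<mu> where "\<mu> > 0" "\<And>x. x \<in> X \<Longrightarrow> r \<le> norm (x - x0) \<Longrightarrow> \<mu> * norm (x - x0) \<le> bregman \<phi> x0 x"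
proof -
  let ?D = "bregman \<phi> x0"
  have "continuous_on X \<phi>"
    using df by (intro differentiable_imp_continuous_on differentiable_at_imp_differentiable_on)
  then have "continuous_on (sphere x0 r) \<phi>"
    using r(2) sphere_cball by (blast intro: continuous_on_subset)
  then have "continuous_on (sphere x0 r) ?D"
    unfolding bregman_def by (intro continuous_intros)
  then obtain p0 where p0: "p0 \<in> sphere x0 r" "\<And>p. p \<in> sphere x0 r \<Longrightarrow> ?D p0 \<le> ?D p"
    using continuous_attains_inf[of "sphere x0 r" ?D] r(1) by fastforce
  have "p0 \<in> X" "p0 \<noteq> x0"
    using p0(1) r sphere_cball by auto
  then have pos: "?D p0 > 0"
    using strictly_convex_on_grad_inequality[OF cvx scvx df[OF x0] x0, of p0] by (simp add: bregman_def)
  show ?thesis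
  proof
    show "?D p0 / r > 0" using pos r(1) by simp
  next
    fix x assume x: "x \<in> X" and far: "r \<le> norm (x - x0)"
    define l where "l = r / norm (x - x0)"
    have l: "0 < l" "l \<le> 1"
      using r(1) far by (auto simp: l_def divide_le_eq_1 intro!: divide_pos_pos)
    define p where "p = (1 - l) *\<^sub>R x0 + l *\<^sub>R x"
    have "p - x0 = l *\<^sub>R (x - x0)"
      by (simp add: p_def algebra_simps)
    moreover have "x \<noteq> x0"
      using r(1) far by auto
    ultimately have "p \<in> sphere x0 r"
      using l r(1) far by (simp add: l_def dist_norm norm_minus_commute)
    then have "?D p0 \<le> ?D p"
      by (rule p0(2))
    also have "?D p \<le> l * ?D x"
      using convex_onD[OF cvx, of l x0 x] l x0 x \<open>p - x0 = l *\<^sub>R (x - x0)\<close>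
      by (simp add: bregman_def p_def inner_scaleR_right algebra_simps)
    finally have "?D p0 \<le> l * ?D x" .
    moreover have "norm (x - x0) > 0"
      using r(1) far by linarith
    ultimately show "?D p0 / r * norm (x - x0) \<le> ?D x"
      using r(1) by (simp add: l_def field_simps)
  qed
qed

lemma bounded_bregman_sublevel:
  fixes \<phi> :: "real^'n \<Rightarrow> real"
  assumes X: "open X" and cvx: "convex_on X \<phi>" and scvx: "strictly_convex_on X \<phi>"
    and df: "\<And>x. x \<in> X \<Longrightarrow> \<phi> differentiable (at x)" and x0: "x0 \<in> X"
  shows "bounded {x \<in> X. bregman \<phi> x0 x \<le> a}"
proof -
  obtain r where r: "0 < r" "cball x0 r \<subseteq> X"
    using X x0 open_contains_cball by blast
  obtain \<mu> where \<mu>: "\<mu> > 0" "\<And>x. x \<in> X \<Longrightarrow> r \<le> norm (x - x0) \<Longrightarrow> \<mu> * norm (x - x0) \<le> bregman \<phi> x0 x"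
    using bregman_linear_growth[OF cvx scvx df x0 r] by blast
  have "norm (x - x0) \<le> max r (a / \<mu>)" if "x \<in> X" "bregman \<phi> x0 x \<le> a" for x
  proof (cases "r \<le> norm (x - x0)")
    case True
    then have "\<mu> * norm (x - x0) \<le> a"
      using \<mu>(2)[OF that(1)] that(2) by linarith
    then show ?thesis
      using \<mu>(1) by (simp add: le_max_iff_disj pos_le_divide_eq mult.commute)
  qed simp
  then have "{x \<in> X. bregman \<phi> x0 x \<le> a} \<subseteq> cball x0 (max r (a / \<mu>))"
    by (auto simp: dist_norm norm_minus_commute[of x0])
  then show ?thesis
    by (rule bounded_subset[OF bounded_cball])
qed

lemma subgradient_norm_bound:
  fixes g :: "'a::real_inner \<Rightarrow> real"
  assumes sub: "\<And>w. w \<in> cball c r \<Longrightarrow> g q + G \<bullet> (w - q) \<le> g w"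
    and bnd: "\<And>w. w \<in> cball c r \<Longrightarrow> g w \<le> B"
    and dir: "0 \<le> G \<bullet> (c - q)" and r: "0 \<le> r"
  shows "r * norm G \<le> B - g q"
proof -
  define w where "w = c + r *\<^sub>R sgn G"
  have w: "w \<in> cball c r"
    using r by (simp add: w_def dist_norm norm_sgn)
  have "G \<bullet> (w - q) = G \<bullet> (c - q) + r * norm G"
    by (cases "G = 0") (simp_all add: w_def inner_add_right inner_diff_right sgn_div_norm
      power2_norm_eq_inner[symmetric] power2_eq_square)
  with sub[OF w] bnd[OF w] dir show ?thesis
    by linarith
qed

lemma tilted_grad_norm_le_on_segment:
  fixes \<phi> :: "real^'n \<Rightarrow> real"
  assumes cvx: "convex_on X \<phi>" and df: "\<And>x. x \<in> X \<Longrightarrow> \<phi> differentiable (at x)"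
    and low: "\<And>x. x \<in> X \<Longrightarrow> L \<le> \<phi> x - y \<bullet> x"
    and zs: "\<And>k. zs k \<in> X" "zs \<longlonglongrightarrow> z" "(\<lambda>k. \<phi> (zs k) - y \<bullet> zs k) \<longlonglongrightarrow> L"
    and ball: "cball c r \<subseteq> X" "0 \<le> r" "\<And>w. w \<in> cball c r \<Longrightarrow> \<phi> w - y \<bullet> w \<le> B"
    and q: "q \<in> open_segment c z" "q \<in> X"
  shows "r * norm (grad \<phi> q - y) \<le> B - L"
proof -
  define g where "g x = \<phi> x - y \<bullet> x" for x
  define G where "G = grad \<phi> q - y"
  have sub: "g q + G \<bullet> (w - q) \<le> g w" if "w \<in> X" for w
    using convex_on_grad_inequality[OF cvx df[OF q(2)] q(2) that]
    by (simp add: g_def G_def inner_diff_left inner_diff_right)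
  have "G \<bullet> (z - q) \<le> L - g q"
  proof (rule LIMSEQ_le)
    show "(\<lambda>k. G \<bullet> (zs k - q)) \<longlonglongrightarrow> G \<bullet> (z - q)"
      by (intro tendsto_intros zs(2))
    show "(\<lambda>k. g (zs k) - g q) \<longlonglongrightarrow> L - g q"
      unfolding g_def by (intro tendsto_intros zs(3))
    show "\<exists>N. \<forall>k\<ge>N. G \<bullet> (zs k - q) \<le> g (zs k) - g q"
      using sub[OF zs(1)] by (auto simp: algebra_simps)
  qed
  also have "\<dots> \<le> 0"
    using low[OF q(2)] by (simp add: g_def)
  finally have "G \<bullet> (z - q) \<le> 0" .
  \<comment> \<open>\<open>G\<close> has no positive component towards \<open>z\<close>, hence a nonnegative one towards \<open>c\<close>\<close>
  moreover obtain s where s: "0 < s" "s < 1" "q = (1 - s) *\<^sub>R c + s *\<^sub>R z"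
    using q(1) in_segment(2) by blast
  moreover have "(1 - s) *\<^sub>R (c - q) = - s *\<^sub>R (z - q)"
    using s(3) by (simp add: algebra_simps)
  ultimately have "0 \<le> G \<bullet> (c - q)"
    by (smt (verit) inner_scaleR_right mult_nonneg_nonpos zero_le_mult_iff)
  then have "r * norm G \<le> B - g q"
    using ball sub by (intro subgradient_norm_bound[of c r g q G B]) (auto simp: g_def)
  with low[OF q(2)] show ?thesis
    by (simp add: g_def G_def)
qed

lemma tilted_grad_bounded_on_segment:
  fixes \<phi> :: "real^'n \<Rightarrow> real"
  assumes X: "open X" and cvx: "convex_on X \<phi>" and df: "\<And>x. x \<in> X \<Longrightarrow> \<phi> differentiable (at x)"
    and low: "\<And>x. x \<in> X \<Longrightarrow> L \<le> \<phi> x - y \<bullet> x"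
    and zs: "\<And>k. zs k \<in> X" "zs \<longlonglongrightarrow> z" "(\<lambda>k. \<phi> (zs k) - y \<bullet> zs k) \<longlonglongrightarrow> L"
    and c: "c \<in> X"
  obtains C where "\<And>q. q \<in> open_segment c z \<Longrightarrow> q \<in> X \<Longrightarrow> norm (grad \<phi> q) \<le> C"
proof -
  obtain r where r: "r > 0" "cball c r \<subseteq> X"
    using X c open_contains_cball by blast
  have "continuous_on X \<phi>"
    using df by (intro differentiable_imp_continuous_on differentiable_at_imp_differentiable_on)
  then have "continuous_on (cball c r) (\<lambda>w. \<phi> w - y \<bullet> w)"
    using r(2) by (intro continuous_intros) (rule continuous_on_subset)
  then have "bounded ((\<lambda>w. \<phi> w - y \<bullet> w) ` cball c r)"
    by (intro compact_imp_bounded compact_continuous_image compact_cball)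
  then obtain B where B: "\<And>w. w \<in> cball c r \<Longrightarrow> \<phi> w - y \<bullet> w \<le> B"
    unfolding bounded_real by (meson abs_le_D1 imageI)
  show ?thesis
  proof
    fix q assume q: "q \<in> open_segment c z" "q \<in> X"
    have "r * norm (grad \<phi> q - y) \<le> B - L"
      using q r B by (intro tilted_grad_norm_le_on_segment[OF cvx df low zs]) auto
    then have "norm (grad \<phi> q - y) \<le> (B - L) / r"
      using r(1) by (simp add: field_simps)
    then show "norm (grad \<phi> q) \<le> norm y + (B - L) / r"
      using norm_triangle_ineq2[of "grad \<phi> q" y] by linarith
  qed
qed

lemma open_segment_sequence_tendsto:
  fixes c z :: "'a::real_normed_vector"
  assumes "c \<noteq> z"
  obtains q where "\<And>k. q k \<in> open_segment c z" "q \<longlonglongrightarrow> z"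
proof
  define t where "t k = 1 - 1 / real (Suc (Suc k))" for k
  show "(1 - t k) *\<^sub>R c + t k *\<^sub>R z \<in> open_segment c z" for k
    using assms unfolding in_segment(2) by (intro conjI exI[of _ "t k"]) (auto simp: t_def)
  have "(\<lambda>k. 1 / real (Suc (Suc k))) \<longlonglongrightarrow> 0"
    using LIMSEQ_Suc[OF LIMSEQ_inverse_real_of_nat] by (simp add: inverse_eq_divide)
  from tendsto_diff[OF tendsto_const this, of 1] have "t \<longlonglongrightarrow> 1"
    by (simp add: t_def[abs_def])
  then have "(\<lambda>k. (1 - t k) *\<^sub>R c + t k *\<^sub>R z) \<longlonglongrightarrow> (1 - 1) *\<^sub>R c + 1 *\<^sub>R z"
    by (intro tendsto_intros)
  then show "(\<lambda>k. (1 - t k) *\<^sub>R c + t k *\<^sub>R z) \<longlonglongrightarrow> z"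
    by simp
qed

lemma legendre_type_minimizing_sequence_limit:
  fixes \<phi> :: "real^'n \<Rightarrow> real"
  assumes leg: "legendre_type X \<phi>"
    and low: "\<And>x. x \<in> X \<Longrightarrow> L \<le> \<phi> x - y \<bullet> x"
    and zs: "\<And>k. zs k \<in> X" "zs \<longlonglongrightarrow> z" "(\<lambda>k. \<phi> (zs k) - y \<bullet> zs k) \<longlonglongrightarrow> L"
  shows "z \<in> X"
proof (rule ccontr)
  assume "z \<notin> X"
  have X: "X \<noteq> {}" "open X" "convex X" "convex_on X \<phi>"
    and df: "\<And>x. x \<in> X \<Longrightarrow> \<phi> differentiable (at x)"
    and blowup: "\<And>s. (\<forall>k. s k \<in> X) \<Longrightarrow> s \<longlonglongrightarrow> z \<Longrightarrow> z \<in> frontier X \<Longrightarrow>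
        filterlim (\<lambda>k. norm (grad \<phi> (s k))) at_top sequentially"
    using leg unfolding legendre_type_def by auto
  have "z \<in> closure X"
    using zs(1,2) closure_sequential by blast
  with \<open>z \<notin> X\<close> X(2) have z: "z \<in> frontier X" "z \<in> closure X"
    by (auto simp: frontier_def interior_open)
  obtain c where c: "c \<in> X" "c \<noteq> z"
    using X(1) \<open>z \<notin> X\<close> by blast
  then obtain C where C: "\<And>q. q \<in> open_segment c z \<Longrightarrow> q \<in> X \<Longrightarrow> norm (grad \<phi> q) \<le> C"
    using tilted_grad_bounded_on_segment[OF X(2,4) df low zs] by blast
  have segment: "open_segment c z \<subseteq> X"
    using in_interior_closure_convex_segment[OF X(3) _ z(2)] c X(2) by (simp add: interior_open)
  obtain q where q: "\<And>k. q k \<in> open_segment c z" and "q \<longlonglongrightarrow> z"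
    using open_segment_sequence_tendsto c(2) by blast
  with segment have "filterlim (\<lambda>k. norm (grad \<phi> (q k))) at_top sequentially"
    using blowup z(1) by blast
  then obtain k where "C + 1 \<le> norm (grad \<phi> (q k))"
    unfolding filterlim_at_top using eventually_happens'[OF trivial_limit_sequentially] by blast
  moreover have "norm (grad \<phi> (q k)) \<le> C"
    using C q segment by blast
  ultimately show False
    by simp
qed

lemma minimizing_sequence_below:
  fixes g :: "'a \<Rightarrow> real"
  assumes x0: "x0 \<in> S" and below: "bdd_below (g ` S)"
  obtains zs where "\<And>k. zs k \<in> S" "\<And>k. g (zs k) \<le> g x0" "(\<lambda>k. g (zs k)) \<longlonglongrightarrow> Inf (g ` S)"
proof -
  define L where "L = Inf (g ` S)"
  have "\<exists>w. w \<in> S \<and> g w \<le> g x0 \<and> g w < L + 1 / real (Suc k)" for k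
  proof -
    obtain w where "w \<in> S" "g w < L + 1 / real (Suc k)"
      using cInf_lessD[of "g ` S" "L + 1 / real (Suc k)"] x0 by (auto simp: L_def)
    then show ?thesis
      using x0 by (cases "g w \<le> g x0") auto
  qed
  then obtain zs where zs: "\<And>k. zs k \<in> S" "\<And>k. g (zs k) \<le> g x0" "\<And>k. g (zs k) < L + 1 / real (Suc k)"
    by metis
  have "(\<lambda>k. g (zs k)) \<longlonglongrightarrow> L"
  proof (rule tendsto_sandwich)
    show "\<forall>\<^sub>F k in sequentially. L \<le> g (zs k)"
      using below zs(1) by (simp add: L_def cInf_lower)
    show "\<forall>\<^sub>F k in sequentially. g (zs k) \<le> L + 1 / real (Suc k)"
      using zs(3) by (simp add: less_imp_le)
    show "(\<lambda>k. L + 1 / real (Suc k)) \<longlonglongrightarrow> L"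
      using tendsto_add[OF tendsto_const LIMSEQ_inverse_real_of_nat, of L] by (simp add: inverse_eq_divide)
  qed simp
  with zs that show ?thesis
    unfolding L_def by blast
qed

lemma legendre_type_tilt_attains_min:
  fixes \<phi> :: "real^'n \<Rightarrow> real"
  assumes leg: "legendre_type X \<phi>" and x0: "x0 \<in> X"
    and below: "bdd_below ((\<lambda>x. \<phi> x - y \<bullet> x) ` X)"
    and sublevel: "bounded {x \<in> X. \<phi> x - y \<bullet> x \<le> \<phi> x0 - y \<bullet> x0}"
  obtains z where "z \<in> X" "\<And>x. x \<in> X \<Longrightarrow> \<phi> z - y \<bullet> z \<le> \<phi> x - y \<bullet> x"
proof -
  define g where "g x = \<phi> x - y \<bullet> x" for x
  define L where "L = Inf (g ` X)"
  have L: "L \<le> g x" if "x \<in> X" for x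
    using below that by (simp add: L_def g_def cInf_lower)
  obtain zs where zs: "\<And>k. zs k \<in> X" "\<And>k. g (zs k) \<le> g x0" and lim_gzs: "(\<lambda>k. g (zs k)) \<longlonglongrightarrow> L"
    using minimizing_sequence_below[OF x0] below unfolding L_def g_def by blast
  have "bounded (range zs)"
    using zs(1,2) by (intro bounded_subset[OF sublevel]) (auto simp: g_def)
  then obtain z \<sigma> where \<sigma>: "strict_mono \<sigma>" and lim: "(zs \<circ> \<sigma>) \<longlonglongrightarrow> z"
    using bounded_imp_convergent_subsequence by blast
  have lim_g: "(\<lambda>k. g ((zs \<circ> \<sigma>) k)) \<longlonglongrightarrow> L"
    using LIMSEQ_subseq_LIMSEQ[OF lim_gzs \<sigma>] by (simp add: comp_def)
  have "z \<in> X"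
  proof (rule legendre_type_minimizing_sequence_limit[OF leg])
    show "L \<le> \<phi> x - y \<bullet> x" if "x \<in> X" for x
      using L[OF that] by (simp add: g_def)
    show "(zs \<circ> \<sigma>) k \<in> X" for k
      using zs(1) by simp
    show "(\<lambda>k. \<phi> ((zs \<circ> \<sigma>) k) - y \<bullet> (zs \<circ> \<sigma>) k) \<longlonglongrightarrow> L"
      using lim_g by (simp add: g_def)
  qed (rule lim)
  moreover have "\<phi> differentiable (at z)"
    using leg \<open>z \<in> X\<close> by (simp add: legendre_type_def)
  then have "isCont g z"
    unfolding g_def by (intro continuous_intros differentiable_imp_continuous_within)
  then have "(\<lambda>k. g ((zs \<circ> \<sigma>) k)) \<longlonglongrightarrow> g z"
    using lim by (rule isCont_tendsto_compose)
  with lim_g have "g z = L"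
    using LIMSEQ_unique by blast
  ultimately show ?thesis
    using L that unfolding g_def by auto
qed

lemma grad_eq_at_tilted_minimizer:
  fixes \<phi> :: "real^'n \<Rightarrow> real"
  assumes "open X" "z \<in> X" "\<phi> differentiable (at z)"
    and min: "\<And>x. x \<in> X \<Longrightarrow> \<phi> z - y \<bullet> z \<le> \<phi> x - y \<bullet> x"
  shows "grad \<phi> z = y"
proof -
  have "((\<lambda>x. \<phi> x - y \<bullet> x) has_derivative (\<lambda>h. grad \<phi> z \<bullet> h - y \<bullet> h)) (at z)"
    using assms(3) by (intro has_derivative_diff has_derivative_grad has_derivative_inner_right has_derivative_ident)
  moreover have "\<forall>\<^sub>F x in at z. \<phi> z - y \<bullet> z \<le> \<phi> x - y \<bullet> x"
    using eventually_at_in_open'[OF assms(1,2)] by eventually_elim (rule min)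
  ultimately have "(\<lambda>h. grad \<phi> z \<bullet> h - y \<bullet> h) = (\<lambda>h. 0)"
    by (rule has_derivative_local_min)
  then have "(grad \<phi> z - y) \<bullet> (grad \<phi> z - y) = 0"
    by (metis inner_diff_left)
  then show ?thesis
    by simp
qed

lemma legendre_type_grad_convex_combination:
  fixes \<phi> :: "real^'n \<Rightarrow> real"
  assumes leg: "legendre_type X \<phi>" and x1: "x1 \<in> X" and x2: "x2 \<in> X" and t: "0 \<le> t" "t < 1"
  shows "(1 - t) *\<^sub>R grad \<phi> x1 + t *\<^sub>R grad \<phi> x2 \<in> grad \<phi> ` X"
proof -
  have X: "open X" and cvx: "convex_on X \<phi>" and scvx: "strictly_convex_on X \<phi>"
    and df: "\<And>x. x \<in> X \<Longrightarrow> \<phi> differentiable (at x)"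
    using leg unfolding legendre_type_def by auto
  define y where "y = (1 - t) *\<^sub>R grad \<phi> x1 + t *\<^sub>R grad \<phi> x2"
  define g where "g x = \<phi> x - y \<bullet> x" for x
  define c where "c = (1 - t) * (\<phi> x1 - grad \<phi> x1 \<bullet> x1) + t * (\<phi> x2 - grad \<phi> x2 \<bullet> x2)"
  have g_split: "g x = c + (1 - t) * bregman \<phi> x1 x + t * bregman \<phi> x2 x" for x
    by (simp add: g_def c_def y_def bregman_def inner_add_left inner_diff_right algebra_simps)
  have g_lower: "c + (1 - t) * bregman \<phi> x1 x \<le> g x" if "x \<in> X" for x
    using g_split[of x] bregman_nonneg[OF cvx df x2 that] t by simp
  have g_below: "c \<le> g x" if "x \<in> X" for x
    using g_lower[OF that] mult_nonneg_nonneg[OF _ bregman_nonneg[OF cvx df x1 that], of "1 - t"] t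
    by linarith
  have "bregman \<phi> x1 x \<le> (g x1 - c) / (1 - t)" if "x \<in> X" "g x \<le> g x1" for x
    using g_lower[OF that(1)] that(2) t by (simp add: pos_le_divide_eq mult.commute)
  then have "{x \<in> X. g x \<le> g x1} \<subseteq> {x \<in> X. bregman \<phi> x1 x \<le> (g x1 - c) / (1 - t)}"
    by auto
  then have "bounded {x \<in> X. \<phi> x - y \<bullet> x \<le> \<phi> x1 - y \<bullet> x1}"
    unfolding g_def using bounded_subset[OF bounded_bregman_sublevel[OF X cvx scvx df x1]] by blast
  moreover have "bdd_below ((\<lambda>x. \<phi> x - y \<bullet> x) ` X)"
    using g_below unfolding g_def by (intro bdd_belowI2)
  ultimately obtain z where "z \<in> X" "\<And>x. x \<in> X \<Longrightarrow> \<phi> z - y \<bullet> z \<le> \<phi> x - y \<bullet> x"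
    using legendre_type_tilt_attains_min[OF leg x1] by blast
  then have "grad \<phi> z = y"
    by (intro grad_eq_at_tilted_minimizer[OF X] df)
  with \<open>z \<in> X\<close> show ?thesis
    unfolding y_def by (metis image_eqI)
qed

lemma legendre_type_convex_grad_image:
  fixes \<phi> :: "real^'n \<Rightarrow> real"
  assumes "legendre_type X \<phi>"
  shows "convex (grad \<phi> ` X)"
  unfolding convex_alt
proof (intro ballI allI impI)
  fix a b and u :: real
  assume "a \<in> grad \<phi> ` X" "b \<in> grad \<phi> ` X" "0 \<le> u \<and> u \<le> 1"
  then show "(1 - u) *\<^sub>R a + u *\<^sub>R b \<in> grad \<phi> ` X"
    using legendre_type_grad_convex_combination[OF assms] by (cases "u = 1") auto
qed

section \<open>Nearly self-adjoint linear maps\<close>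

lemma norm_adjoint_le:
  fixes J JT :: "'a::real_inner \<Rightarrow> 'a"
  assumes adj: "\<And>a b. JT a \<bullet> b = a \<bullet> J b" and bound: "\<And>w. norm (J w) \<le> M * norm w"
  shows "norm (JT w) \<le> M * norm w"
proof (cases "JT w = 0")
  case True
  then show ?thesis
    using bound[of w] norm_ge_zero[of "J w"] by (simp del: norm_ge_zero)
next
  case False
  have "norm (JT w) * norm (JT w) = w \<bullet> J (JT w)"
    using adj[of w "JT w"] by (simp add: power2_norm_eq_inner[symmetric] power2_eq_square)
  also have "\<dots> \<le> norm w * norm (J (JT w))"
    by (rule norm_cauchy_schwarz)
  also have "\<dots> \<le> norm w * (M * norm (JT w))"
    by (rule mult_left_mono[OF bound norm_ge_zero])
  finally show ?thesis
    using False by (simp add: mult.assoc mult.commute[of "norm w"])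
qed

lemma self_adjoint_psd_norm_sq_le:
  fixes P :: "'a::real_inner \<Rightarrow> 'a"
  assumes lin: "linear P" and sym: "\<And>a b. P a \<bullet> b = a \<bullet> P b"
    and psd: "\<And>w. 0 \<le> w \<bullet> P w" and upper: "\<And>w. w \<bullet> P w \<le> c * (norm w)\<^sup>2"
  shows "(norm (P v))\<^sup>2 \<le> c * (v \<bullet> P v)"
proof -
  interpret P: linear P by fact
  define p where "p = P v"
  have quad: "0 \<le> v \<bullet> p - 2 * a * (p \<bullet> p) + a\<^sup>2 * (p \<bullet> P p)" for a
  proof -
    have "0 \<le> (v - a *\<^sub>R p) \<bullet> P (v - a *\<^sub>R p)"
      by (rule psd)
    also have "\<dots> = v \<bullet> p - a * (v \<bullet> P p) - a * (p \<bullet> p) + a\<^sup>2 * (p \<bullet> P p)"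
      by (simp add: p_def P.diff P.scale inner_diff_left inner_diff_right power2_eq_square algebra_simps)
    also have "v \<bullet> P p = p \<bullet> p"
      using sym[of v p] by (simp add: p_def inner_commute)
    finally show ?thesis by simp
  qed
  have pPp: "p \<bullet> P p \<le> c * (p \<bullet> p)"
    using upper[of p] by (simp add: power2_norm_eq_inner)
  show ?thesis
  proof (cases "c > 0")
    case True
    have "(1 / c)\<^sup>2 * (p \<bullet> P p) \<le> (1 / c)\<^sup>2 * (c * (p \<bullet> p))"
      using pPp by (rule mult_left_mono) simp
    also have "\<dots> = (1 / c) * (p \<bullet> p)"
      using True by (simp add: power2_eq_square)
    finally have "0 \<le> v \<bullet> p - (1 / c) * (p \<bullet> p)"
      using quad[of "1 / c"] by simp
    with True show ?thesis
      by (simp add: p_def power2_norm_eq_inner field_simps)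
  next
    case False
    then have "c * (p \<bullet> p) \<le> 0" "c * (norm v)\<^sup>2 \<le> 0"
      by (simp_all add: mult_nonpos_nonneg)
    with pPp upper[of v] psd[of v] have "p \<bullet> P p \<le> 0" "v \<bullet> p = 0"
      unfolding p_def by linarith+
    moreover have "0 \<le> p \<bullet> p" "0 \<le> v \<bullet> p - 2 * (p \<bullet> p) + p \<bullet> P p"
      using quad[of 1] by simp_all
    ultimately have "p \<bullet> p = 0"
      by linarith
    with \<open>v \<bullet> p = 0\<close> show ?thesis
      by (simp add: p_def power2_norm_eq_inner)
  qed
qed

lemma nearly_self_adjoint_interpolation:
  fixes J JT :: "'a::real_inner \<Rightarrow> 'a"
  assumes lin: "linear J" "linear JT" and adj: "\<And>a b. JT a \<bullet> b = a \<bullet> J b"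
    and lower: "\<And>w. m * (norm w)\<^sup>2 \<le> J w \<bullet> w"
    and upper: "\<And>w. norm (J w) \<le> M * norm w"
    and skew: "\<And>w. norm (JT w - J w) \<le> \<delta> * norm w"
  shows "(norm (J v))\<^sup>2 + (m * M - M * \<delta> - \<delta>\<^sup>2 / 4) * (norm v)\<^sup>2 \<le> (m + M) * (J v \<bullet> v)"
proof -
  interpret J: linear J by (fact lin)
  interpret JT: linear JT by (fact lin)
  define S where "S w = (1/2) *\<^sub>R (J w + JT w)" for w
  define K where "K w = (1/2) *\<^sub>R (J w - JT w)" for w
  have S_form: "S w \<bullet> w = J w \<bullet> w" for w
    using adj[of w w] by (simp add: S_def inner_add_left inner_add_right inner_commute)
  \<comment> \<open>the self-adjoint part \<open>S\<close> has spectrum in \<open>[m, M]\<close>\<close>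
  have "(norm (S v - m *\<^sub>R v))\<^sup>2 \<le> (M - m) * (v \<bullet> (S v - m *\<^sub>R v))"
  proof (rule self_adjoint_psd_norm_sq_le)
    show "linear (\<lambda>w. S w - m *\<^sub>R w)"
      unfolding S_def by (rule linearI) (simp_all add: J.add JT.add J.scale JT.scale algebra_simps)
    show "(S a - m *\<^sub>R a) \<bullet> b = a \<bullet> (S b - m *\<^sub>R b)" for a b
      using adj[of a b] adj[of b a]
      by (simp add: S_def inner_add_left inner_add_right inner_diff_left inner_diff_right inner_commute)
    show "0 \<le> w \<bullet> (S w - m *\<^sub>R w)" for w
      using lower[of w] S_form[of w] by (simp add: inner_diff_right inner_commute power2_norm_eq_inner)
    show "w \<bullet> (S w - m *\<^sub>R w) \<le> (M - m) * (norm w)\<^sup>2" for w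
      using norm_cauchy_schwarz[of "J w" w] mult_right_mono[OF upper[of w] norm_ge_zero[of w]] S_form[of w]
      by (simp add: inner_diff_right inner_commute power2_norm_eq_inner[symmetric] power2_eq_square algebra_simps)
  qed
  then have S_sq: "(norm (S v))\<^sup>2 \<le> (m + M) * (S v \<bullet> v) - m * M * (norm v)\<^sup>2"
    by (simp add: power2_norm_eq_inner inner_diff_left inner_diff_right inner_commute algebra_simps)
  have "norm (S v) \<le> M * norm v"
    using norm_triangle_ineq[of "J v" "JT v"] upper[of v] norm_adjoint_le[OF adj upper, of v]
    by (simp add: S_def)
  moreover have "norm (K v) \<le> \<delta> / 2 * norm v"
    using skew[of v] by (simp add: K_def norm_minus_commute)
  ultimately have "S v \<bullet> K v \<le> M * norm v * (\<delta> / 2 * norm v)"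
    by (smt (verit) mult_mono norm_cauchy_schwarz norm_ge_zero)
  then have cross: "S v \<bullet> K v \<le> M * \<delta> / 2 * (norm v)\<^sup>2"
    by (simp add: power2_eq_square algebra_simps)
  have "(norm (K v))\<^sup>2 \<le> (\<delta> / 2 * norm v)\<^sup>2"
    using \<open>norm (K v) \<le> \<delta> / 2 * norm v\<close> by (intro power_mono) auto
  then have K_sq: "(norm (K v))\<^sup>2 \<le> \<delta>\<^sup>2 / 4 * (norm v)\<^sup>2"
    by (simp add: power_mult_distrib power_divide)
  have "J v = S v + K v"
    by (simp add: S_def K_def scaleR_add_right[symmetric])
  then have "(norm (J v))\<^sup>2 = (norm (S v))\<^sup>2 + 2 * (S v \<bullet> K v) + (norm (K v))\<^sup>2"
    by (simp add: power2_norm_eq_inner inner_add_left inner_add_right inner_commute)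
  with S_sq cross K_sq S_form[of v] show ?thesis
    by (simp add: algebra_simps)
qed

section \<open>The pointwise bound for the Hessians\<close>

lemma eventually_at_right_line_in_open:
  fixes x h :: "'a::real_normed_vector"
  assumes "open X" "x \<in> X"
  shows "\<forall>\<^sub>F s in at_right 0. x + s *\<^sub>R h \<in> X"
proof -
  have "((\<lambda>s::real. x + s *\<^sub>R h) \<longlongrightarrow> x + 0 *\<^sub>R h) (at_right 0)"
    by (intro tendsto_intros)
  then show ?thesis
    using topological_tendstoD assms by fastforce
qed

lemma has_derivative_monotone_ineq:
  fixes F G :: "'a::real_normed_vector \<Rightarrow> 'b::real_inner"
  assumes X: "open X" "x \<in> X"
    and F: "(F has_derivative F') (at x)" and G: "(G has_derivative G') (at x)"
    and mono: "\<And>x'. x' \<in> X \<Longrightarrow> m * (norm (G x' - G x))\<^sup>2 \<le> (F x' - F x) \<bullet> (G x' - G x)"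
  shows "m * (norm (G' h))\<^sup>2 \<le> F' h \<bullet> G' h"
proof (rule tendsto_le[OF trivial_limit_at_right_real])
  let ?dF = "\<lambda>s. (1 / s) *\<^sub>R (F (x + s *\<^sub>R h) - F x)"
  let ?dG = "\<lambda>s. (1 / s) *\<^sub>R (G (x + s *\<^sub>R h) - G x)"
  show "((\<lambda>s. ?dF s \<bullet> ?dG s) \<longlongrightarrow> F' h \<bullet> G' h) (at_right 0)"
    by (intro tendsto_inner tendsto_difference_quotient F G)
  show "((\<lambda>s. m * (norm (?dG s))\<^sup>2) \<longlongrightarrow> m * (norm (G' h))\<^sup>2) (at_right 0)"
    by (intro tendsto_intros tendsto_difference_quotient G)
  show "\<forall>\<^sub>F s in at_right 0. m * (norm (?dG s))\<^sup>2 \<le> ?dF s \<bullet> ?dG s"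
    using eventually_at_right_line_in_open[OF X, of h]
  proof eventually_elim
    case (elim s)
    from mult_left_mono[OF mono[OF elim], of "(1 / s)\<^sup>2"] show ?case
      by (simp only: norm_scaleR inner_scaleR_left inner_scaleR_right power_mult_distrib power2_abs)
        (simp add: power2_eq_square algebra_simps)
  qed
qed

lemma has_derivative_lipschitz_ineq:
  fixes F G :: "'a::real_normed_vector \<Rightarrow> 'b::real_normed_vector"
  assumes X: "open X" "x \<in> X"
    and F: "(F has_derivative F') (at x)" and G: "(G has_derivative G') (at x)"
    and lip: "\<And>x'. x' \<in> X \<Longrightarrow> norm (F x' - F x) \<le> M * norm (G x' - G x)"
  shows "norm (F' h) \<le> M * norm (G' h)"
proof (rule tendsto_le[OF trivial_limit_at_right_real])
  let ?dF = "\<lambda>s. (1 / s) *\<^sub>R (F (x + s *\<^sub>R h) - F x)"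
  let ?dG = "\<lambda>s. (1 / s) *\<^sub>R (G (x + s *\<^sub>R h) - G x)"
  show "((\<lambda>s. norm (?dF s)) \<longlongrightarrow> norm (F' h)) (at_right 0)"
    by (intro tendsto_intros tendsto_difference_quotient F)
  show "((\<lambda>s. M * norm (?dG s)) \<longlongrightarrow> M * norm (G' h)) (at_right 0)"
    by (intro tendsto_intros tendsto_difference_quotient G)
  show "\<forall>\<^sub>F s in at_right 0. norm (?dF s) \<le> M * norm (?dG s)"
    using eventually_at_right_line_in_open[OF X, of h]
  proof eventually_elim
    case (elim s)
    from mult_left_mono[OF lip[OF elim], of "\<bar>1 / s\<bar>"] show ?case
      by (simp only: norm_scaleR mult.left_commute[of M] abs_ge_zero)
  qed
qed

lemma matrix_inv_right:
  fixes A :: "'a::semiring_1^'n^'m"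
  assumes "invertible A"
  shows "A ** matrix_inv A = mat 1"
proof -
  have "\<exists>A'. A ** A' = mat 1 \<and> A' ** A = mat 1"
    using assms by (simp add: invertible_def)
  then show ?thesis
    unfolding matrix_inv_def by (rule someI2_ex) blast
qed

lemma hessian_interpolation_bound:
  fixes f \<phi> :: "real^'n \<Rightarrow> real"
  assumes X: "open X" "x \<in> X"
    and df: "\<And>z. z \<in> X \<Longrightarrow> f differentiable (at z)" and dgf: "grad f differentiable (at x)"
    and d\<phi>: "\<And>z. z \<in> X \<Longrightarrow> \<phi> differentiable (at z)" and dg\<phi>: "grad \<phi> differentiable (at x)"
    and mono: "\<And>x'. x' \<in> X \<Longrightarrow>
      m * (norm (grad \<phi> x' - grad \<phi> x))\<^sup>2 \<le> (grad f x' - grad f x) \<bullet> (grad \<phi> x' - grad \<phi> x)"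
    and lip: "\<And>x'. x' \<in> X \<Longrightarrow> norm (grad f x' - grad f x) \<le> M * norm (grad \<phi> x' - grad \<phi> x)"
    and inv: "invertible (hessian \<phi> x)"
    and comm: "spec_norm (commutator (matrix_inv (hessian \<phi> x)) (hessian f x)) \<le> \<delta>"
  defines "J \<equiv> \<lambda>v. hessian f x *v (matrix_inv (hessian \<phi> x) *v v)"
  shows "(norm (J v))\<^sup>2 + (m * M - M * \<delta> - \<delta>\<^sup>2 / 4) * (norm v)\<^sup>2 \<le> (m + M) * (J v \<bullet> v)"
proof (rule nearly_self_adjoint_interpolation)
  let ?Hf = "hessian f x" and ?H\<phi> = "hessian \<phi> x"
  let ?P = "matrix_inv ?H\<phi>"
  define JT where "JT w = ?P *v (?Hf *v w)" for w
  have right_inv: "?H\<phi> *v (?P *v w) = w" for w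
    using matrix_inv_right[OF inv] by (simp add: matrix_vector_mul_assoc)
  have P_sym: "(?P *v a) \<bullet> b = a \<bullet> (?P *v b)" for a b
    using hessian_symmetric[OF X d\<phi> dg\<phi>, of "?P *v b" "?P *v a"] by (simp add: right_inv inner_commute)
  show "linear J" "linear JT"
    unfolding J_def JT_def by (simp_all add: linear_compose[unfolded o_def] matrix_vector_mul_linear)
  show "JT a \<bullet> b = a \<bullet> J b" for a b
    using hessian_symmetric[OF X df dgf, of a "?P *v b"] P_sym
    by (simp add: J_def JT_def inner_commute)
  show "m * (norm w)\<^sup>2 \<le> J w \<bullet> w" for w
    using has_derivative_monotone_ineq[OF X has_derivative_hessian[OF dgf] has_derivative_hessian[OF dg\<phi>] mono,
      of "?P *v w"]
    by (simp add: J_def right_inv)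
  show "norm (J w) \<le> M * norm w" for w
    using has_derivative_lipschitz_ineq[OF X has_derivative_hessian[OF dgf] has_derivative_hessian[OF dg\<phi>] lip,
      of "?P *v w"]
    by (simp add: J_def right_inv)
  show "norm (JT w - J w) \<le> \<delta> * norm w" for w
  proof -
    have "JT w - J w = commutator ?P ?Hf *v w"
      by (simp add: JT_def J_def commutator_def matrix_vector_mult_diff_rdistrib matrix_vector_mul_assoc)
    also have "norm \<dots> \<le> spec_norm (commutator ?P ?Hf) * norm w"
      unfolding spec_norm_def by (rule onorm) simp
    also have "\<dots> \<le> \<delta> * norm w"
      using comm by (rule mult_right_mono) simp
    finally show ?thesis .
  qed
qed

section \<open>The mean value argument in dual coordinates\<close>

lemma convex_norm_sq_add_le_inner:
  fixes a :: "'a::real_inner"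
  shows "convex {w. (norm w)\<^sup>2 + b \<le> a \<bullet> w}"
proof (rule convexI)
  fix x y :: 'a and u v :: real
  assume x: "x \<in> {w. (norm w)\<^sup>2 + b \<le> a \<bullet> w}" and y: "y \<in> {w. (norm w)\<^sup>2 + b \<le> a \<bullet> w}"
    and uv: "0 \<le> u" "0 \<le> v" "u + v = 1"
  have v: "v = 1 - u"
    using uv(3) by simp
  have "(norm (u *\<^sub>R x + v *\<^sub>R y))\<^sup>2 = u * (norm x)\<^sup>2 + v * (norm y)\<^sup>2 - u * v * (norm (x - y))\<^sup>2"
    unfolding power2_norm_eq_inner v
    by (simp add: inner_add_left inner_add_right inner_diff_left inner_diff_right inner_commute[of y x]
      algebra_simps)
  also have "\<dots> \<le> u * (a \<bullet> x - b) + v * (a \<bullet> y - b)"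
    using x y uv by (smt (verit) mem_Collect_eq mult_left_mono mult_nonneg_nonneg zero_le_power2)
  also have "\<dots> = a \<bullet> (u *\<^sub>R x + v *\<^sub>R y) - b"
    unfolding v by (simp add: inner_add_right algebra_simps)
  finally show "u *\<^sub>R x + v *\<^sub>R y \<in> {w. (norm w)\<^sup>2 + b \<le> a \<bullet> w}"
    by simp
qed

lemma mean_value_in_closed_convex:
  fixes \<psi> :: "real \<Rightarrow> 'a::euclidean_space"
  assumes deriv: "\<And>t. 0 \<le> t \<Longrightarrow> t \<le> 1 \<Longrightarrow> (\<psi> has_vector_derivative \<psi>' t) (at t)"
    and in_K: "\<And>t. 0 < t \<Longrightarrow> t < 1 \<Longrightarrow> \<psi>' t \<in> K" and K: "convex K" "closed K"
  shows "\<psi> 1 - \<psi> 0 \<in> K"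
proof (rule ccontr)
  assume "\<psi> 1 - \<psi> 0 \<notin> K"
  then obtain a b where ab: "a \<bullet> (\<psi> 1 - \<psi> 0) < b" "\<And>w. w \<in> K \<Longrightarrow> b < a \<bullet> w"
    using separating_hyperplane_closed_point[OF K] by blast
  have "((\<lambda>t. a \<bullet> \<psi> t) has_real_derivative a \<bullet> \<psi>' t) (at t)" if "0 \<le> t" "t \<le> 1" for t
    using has_derivative_inner_right[OF deriv[OF that, unfolded has_vector_derivative_def], of a]
    by (simp add: has_real_derivative_iff_has_vector_derivative has_vector_derivative_def)
  from MVT2[OF zero_less_one this] obtain \<tau> where "0 < \<tau>" "\<tau> < 1" "a \<bullet> \<psi> 1 - a \<bullet> \<psi> 0 = a \<bullet> \<psi>' \<tau>"
    by auto
  with ab(2)[OF in_K] have "b < a \<bullet> (\<psi> 1 - \<psi> 0)"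
    by (simp add: inner_diff_right)
  with ab(1) show False
    by simp
qed

lemma has_derivative_inv_into_grad:
  fixes \<phi> :: "real^'n \<Rightarrow> real"
  assumes X: "open X" "z \<in> X" and inj: "inj_on (grad \<phi>) X"
    and dg: "\<And>x. x \<in> X \<Longrightarrow> grad \<phi> differentiable (at x)" and inv: "invertible (hessian \<phi> z)"
  shows "(inv_into X (grad \<phi>) has_derivative (\<lambda>w. matrix_inv (hessian \<phi> z) *v w)) (at (grad \<phi> z))"
proof (rule has_derivative_inverse_strong[OF X])
  show "continuous_on X (grad \<phi>)"
    using dg by (intro differentiable_imp_continuous_on differentiable_at_imp_differentiable_on)
  show "inv_into X (grad \<phi>) (grad \<phi> x) = x" if "x \<in> X" for x
    using inj that by simp
  show "(grad \<phi> has_derivative (\<lambda>h. hessian \<phi> z *v h)) (at z)"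
    using dg[OF X(2)] by (rule has_derivative_hessian)
  show "(\<lambda>h. hessian \<phi> z *v h) \<circ> (\<lambda>w. matrix_inv (hessian \<phi> z) *v w) = id"
    using matrix_inv_right[OF inv] by (simp add: fun_eq_iff matrix_vector_mul_assoc)
qed

lemma grad_increment_in_closed_convex:
  fixes f \<phi> :: "real^'n \<Rightarrow> real"
  assumes leg: "legendre_type X \<phi>"
    and dgf: "\<And>x. x \<in> X \<Longrightarrow> grad f differentiable (at x)"
    and dg\<phi>: "\<And>x. x \<in> X \<Longrightarrow> grad \<phi> differentiable (at x)"
    and inv: "\<And>x. x \<in> X \<Longrightarrow> invertible (hessian \<phi> x)"
    and K: "convex K" "closed K" and x1: "x1 \<in> X" and x2: "x2 \<in> X"
    and in_K: "\<And>z. z \<in> X \<Longrightarrow> hessian f z *v (matrix_inv (hessian \<phi> z) *v (grad \<phi> x1 - grad \<phi> x2)) \<in> K"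
  shows "grad f x1 - grad f x2 \<in> K"
proof -
  have X: "open X" and inj: "inj_on (grad \<phi>) X"
    using leg inj_on_grad_strictly_convex[of X \<phi>] unfolding legendre_type_def by auto
  define v where "v = grad \<phi> x1 - grad \<phi> x2"
  define z where "z t = inv_into X (grad \<phi>) (grad \<phi> x2 + t *\<^sub>R v)" for t
  have z: "z t \<in> X" "grad \<phi> (z t) = grad \<phi> x2 + t *\<^sub>R v" if "0 \<le> t" "t \<le> 1" for t
  proof -
    have "(1 - t) *\<^sub>R grad \<phi> x2 + t *\<^sub>R grad \<phi> x1 \<in> grad \<phi> ` X"
      using legendre_type_convex_grad_image[OF leg] x1 x2 that by (simp add: convex_alt)
    moreover have "(1 - t) *\<^sub>R grad \<phi> x2 + t *\<^sub>R grad \<phi> x1 = grad \<phi> x2 + t *\<^sub>R v"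
      by (simp add: v_def algebra_simps)
    ultimately show "z t \<in> X" "grad \<phi> (z t) = grad \<phi> x2 + t *\<^sub>R v"
      by (simp_all add: z_def inv_into_into f_inv_into_f)
  qed
  have "((\<lambda>t. grad f (z t)) has_vector_derivative hessian f (z t) *v (matrix_inv (hessian \<phi> (z t)) *v v)) (at t)"
    if "0 \<le> t" "t \<le> 1" for t
  proof -
    have "(inv_into X (grad \<phi>) has_derivative (\<lambda>w. matrix_inv (hessian \<phi> (z t)) *v w)) (at (grad \<phi> x2 + t *\<^sub>R v))"
      using has_derivative_inv_into_grad[OF X z(1)[OF that] inj dg\<phi> inv[OF z(1)[OF that]]] z(2)[OF that] by simp
    moreover have "(grad f has_derivative (\<lambda>h. hessian f (z t) *v h)) (at (inv_into X (grad \<phi>) (grad \<phi> x2 + t *\<^sub>R v)))"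
      using has_derivative_hessian[OF dgf[OF z(1)[OF that]]] by (simp add: z_def)
    ultimately show ?thesis
      using has_vector_derivative_along_line[OF has_derivative_compose] by (simp add: z_def)
  qed
  then have "grad f (z 1) - grad f (z 0) \<in> K"
    using z(1) in_K unfolding v_def by (intro mean_value_in_closed_convex[OF _ _ K]) auto
  moreover have "z 1 = x1" "z 0 = x2"
    using inj x1 x2 by (simp_all add: z_def v_def)
  ultimately show ?thesis
    by simp
qed

lemma grad_increment_interpolation_inequality:
  fixes f \<phi> :: "real^'n \<Rightarrow> real"
  assumes leg: "legendre_type X \<phi>"
    and df: "\<And>x. x \<in> X \<Longrightarrow> f differentiable (at x)"
    and dgf: "\<And>x. x \<in> X \<Longrightarrow> grad f differentiable (at x)"
    and dg\<phi>: "\<And>x. x \<in> X \<Longrightarrow> grad \<phi> differentiable (at x)"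
    and mono: "\<And>x x'. x \<in> X \<Longrightarrow> x' \<in> X \<Longrightarrow>
      m * (norm (grad \<phi> x - grad \<phi> x'))\<^sup>2 \<le> (grad f x - grad f x') \<bullet> (grad \<phi> x - grad \<phi> x')"
    and lip: "\<And>x x'. x \<in> X \<Longrightarrow> x' \<in> X \<Longrightarrow> norm (grad f x - grad f x') \<le> M * norm (grad \<phi> x - grad \<phi> x')"
    and inv: "\<And>x. x \<in> X \<Longrightarrow> invertible (hessian \<phi> x)"
    and comm: "\<And>x. x \<in> X \<Longrightarrow> spec_norm (commutator (matrix_inv (hessian \<phi> x)) (hessian f x)) \<le> \<delta>"
    and x1: "x1 \<in> X" and x2: "x2 \<in> X"
  shows "(norm (grad f x1 - grad f x2))\<^sup>2 + (m * M - M * \<delta> - \<delta>\<^sup>2 / 4) * (norm (grad \<phi> x1 - grad \<phi> x2))\<^sup>2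
    \<le> (m + M) * ((grad f x1 - grad f x2) \<bullet> (grad \<phi> x1 - grad \<phi> x2))"
proof -
  have X: "open X" and d\<phi>: "\<And>x. x \<in> X \<Longrightarrow> \<phi> differentiable (at x)"
    using leg unfolding legendre_type_def by auto
  define v where "v = grad \<phi> x1 - grad \<phi> x2"
  define K where "K = {w. (norm w)\<^sup>2 + (m * M - M * \<delta> - \<delta>\<^sup>2 / 4) * (norm v)\<^sup>2 \<le> ((m + M) *\<^sub>R v) \<bullet> w}"
  have "grad f x1 - grad f x2 \<in> K"
  proof (rule grad_increment_in_closed_convex[OF leg dgf dg\<phi> inv _ _ x1 x2])
    show "convex K" "closed K"
      unfolding K_def by (rule convex_norm_sq_add_le_inner) (intro closed_Collect_le continuous_intros)
    fix z assume "z \<in> X"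
    from hessian_interpolation_bound[OF X this df dgf[OF this] d\<phi> dg\<phi>[OF this]
        mono[OF _ this] lip[OF _ this] inv[OF this] comm[OF this], of v]
    show "hessian f z *v (matrix_inv (hessian \<phi> z) *v (grad \<phi> x1 - grad \<phi> x2)) \<in> K"
      by (simp add: K_def v_def inner_commute)
  qed
  then show ?thesis
    by (simp add: K_def v_def inner_commute)
qed

theorem proposition2:
  fixes X :: "(real^'n) set" and f \<phi> :: "real^'n \<Rightarrow> real"
    and m M \<delta> :: real
  assumes X_open: "open X" and X_contr: "contractible X"
    and f_C3: "C3_on X f" and phi_C3: "C3_on X \<phi>"
    and phi_leg: "legendre_type X \<phi>"
    and A3: "m \<ge> 0"
      "\<And>x x'. x \<in> X \<Longrightarrow> x' \<in> X \<Longrightarrow>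
         m * (norm (grad \<phi> x - grad \<phi> x'))\<^sup>2
           \<le> (grad f x - grad f x') \<bullet> (grad \<phi> x - grad \<phi> x')"
    and A4: "M > 0"
      "\<And>x x'. x \<in> X \<Longrightarrow> x' \<in> X \<Longrightarrow>
         norm (grad f x - grad f x') \<le> M * norm (grad \<phi> x - grad \<phi> x')"
    and A5: "\<delta> \<ge> 0"
      "\<And>x. x \<in> X \<Longrightarrow> invertible (hessian \<phi> x)"
      "\<And>x. x \<in> X \<Longrightarrow>
         spec_norm (commutator (matrix_inv (hessian \<phi> x)) (hessian f x)) \<le> \<delta>"
  shows "\<forall>x1\<in>X. \<forall>x2\<in>X.
     (grad f x1 - grad f x2) \<bullet> (grad \<phi> x1 - grad \<phi> x2)
       \<ge> (1 / (m + M)) * (norm (grad f x1 - grad f x2))\<^sup>2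
         + ((4*m*M - 4*M*\<delta> - \<delta>\<^sup>2) / (4*(m + M))) * (norm (grad \<phi> x1 - grad \<phi> x2))\<^sup>2"
proof (intro ballI)
  fix x1 x2 assume "x1 \<in> X" "x2 \<in> X"
  have "\<And>x. x \<in> X \<Longrightarrow> f differentiable (at x)" "\<And>x. x \<in> X \<Longrightarrow> grad f differentiable (at x)"
    "\<And>x. x \<in> X \<Longrightarrow> grad \<phi> differentiable (at x)"
    using f_C3 phi_C3 unfolding C3_on_def by auto
  from grad_increment_interpolation_inequality[OF phi_leg this A3(2) A4(2) A5(2,3) \<open>x1 \<in> X\<close> \<open>x2 \<in> X\<close>]
  have "((norm (grad f x1 - grad f x2))\<^sup>2 + (m * M - M * \<delta> - \<delta>\<^sup>2 / 4) * (norm (grad \<phi> x1 - grad \<phi> x2))\<^sup>2)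
      / (m + M) \<le> (grad f x1 - grad f x2) \<bullet> (grad \<phi> x1 - grad \<phi> x2)"
    using A3(1) A4(1) by (simp add: pos_divide_le_eq mult.commute)
  moreover have "(4*m*M - 4*M*\<delta> - \<delta>\<^sup>2) / (4*(m + M)) = (m * M - M * \<delta> - \<delta>\<^sup>2 / 4) / (m + M)"
    by (simp add: divide_simps)
  ultimately show "(grad f x1 - grad f x2) \<bullet> (grad \<phi> x1 - grad \<phi> x2)
       \<ge> (1 / (m + M)) * (norm (grad f x1 - grad f x2))\<^sup>2
         + ((4*m*M - 4*M*\<delta> - \<delta>\<^sup>2) / (4*(m + M))) * (norm (grad \<phi> x1 - grad \<phi> x2))\<^sup>2"
    by (simp add: add_divide_distrib)
qed

end
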